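(* Let $\sigma=\{\sigma_z\}_{z\in\mathbb{Z}}$ be i.i.d. strictly positive random variables with law $\mathbf{P}$, with $L(x):=1/\mathbf{P}(\sigma_0>x)$ slowly varying at infinity (i.e. $\lim_{u\to\infty}L(uv)/L(u)=1$ for every $v>0$). Let $h_t$ be any function with $h_t\to\infty$, $h_t^2=o(r_t)$, and such that, for all sufficiently large $t$, \[ L(\ell_t/h_t^3)>L(\ell_t)(1-1/h_t)\quad\text{and}\quad L(\ell_th_t^3)<L(\ell_t)(1+1/h_t).\] Then $\mathbf{P}(\mathcal{B}^h_t)\to1$ as $t\to\infty$, where $\mathcal{B}^h_t:=\{m_t>th_t^2/r_t\}$.
   Context: $\ell_t:=\min\{s\ge0: sL(s)\ge t\}$, $r_t:=L(\ell_t)$, $Z^{(1)}_t:=\min\{z\in\mathbb{Z}^+:\sigma_z>\ell_t\}$, $Z^{(2)}_t:=\max\{z\in\mathbb{Z}^-:\sigma_z>\ell_t\}$ (with $\mathbb{Z}^+$ the positive and $\mathbb{Z}^-$ the non-positive integers), $\Gamma_t:=\{Z^{(1)}_t,Z^{(2)}_t\}$ and $m_t:=\min_{z\in\Gamma_t}\sigma_z$. *)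

theory Defs
  imports "HOL-Probability.Probability" "HOL-Library.Landau_Symbols"
begin

definition tailL :: "'a measure \<Rightarrow> (int \<Rightarrow> 'a \<Rightarrow> real) \<Rightarrow> real \<Rightarrow> real" where
  "tailL M \<sigma> x = 1 / measure M {\<omega> \<in> space M. \<sigma> 0 \<omega> > x}"

definition ell :: "'a measure \<Rightarrow> (int \<Rightarrow> 'a \<Rightarrow> real) \<Rightarrow> real \<Rightarrow> real" where
  "ell M \<sigma> t = (LEAST s::real. 0 \<le> s \<and> t \<le> s * tailL M \<sigma> s)"

definition rr :: "'a measure \<Rightarrow> (int \<Rightarrow> 'a \<Rightarrow> real) \<Rightarrow> real \<Rightarrow> real" where
  "rr M \<sigma> t = tailL M \<sigma> (ell M \<sigma> t)"

definition Z1 :: "'a measure \<Rightarrow> (int \<Rightarrow> 'a \<Rightarrow> real) \<Rightarrow> real \<Rightarrow> 'a \<Rightarrow> int" where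
  "Z1 M \<sigma> t \<omega> = (LEAST z::int. 0 < z \<and> \<sigma> z \<omega> > ell M \<sigma> t)"

definition Z2 :: "'a measure \<Rightarrow> (int \<Rightarrow> 'a \<Rightarrow> real) \<Rightarrow> real \<Rightarrow> 'a \<Rightarrow> int" where
  "Z2 M \<sigma> t \<omega> = (GREATEST z::int. z \<le> 0 \<and> \<sigma> z \<omega> > ell M \<sigma> t)"

definition mt :: "'a measure \<Rightarrow> (int \<Rightarrow> 'a \<Rightarrow> real) \<Rightarrow> real \<Rightarrow> 'a \<Rightarrow> real" where
  "mt M \<sigma> t \<omega> = Min ((\<lambda>z. \<sigma> z \<omega>) ` {Z1 M \<sigma> t \<omega>, Z2 M \<sigma> t \<omega>})"

definition Bh :: "'a measure \<Rightarrow> (int \<Rightarrow> 'a \<Rightarrow> real) \<Rightarrow> (real \<Rightarrow> real) \<Rightarrow> real \<Rightarrow> 'a set" where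
  "Bh M \<sigma> h t = {\<omega> \<in> space M. mt M \<sigma> t \<omega> > t * (h t)\<^sup>2 / rr M \<sigma> t}"

end

theory Submission
  imports Defs "HOL-Real_Asymp.Real_Asymp"
begin

text \<open>
  Since \<open>t \<le> \<ell>\<^sub>t r\<^sub>t\<close>, the threshold \<open>t h\<^sub>t\<^sup>2 / r\<^sub>t\<close> lies below \<open>y = \<ell>\<^sub>t h\<^sub>t\<^sup>3\<close>, so it suffices that
  \<open>\<sigma>\<close> at the first exceedance of \<open>\<ell>\<^sub>t\<close> on either side of the origin is unlikely to be at most \<open>y\<close>.
  Look at the \<open>N \<approx> \<surd>h\<^sub>t / P(\<sigma>\<^sub>0 > \<ell>\<^sub>t)\<close> sites nearest to the origin on that side: by
  independence none of them exceeds \<open>\<ell>\<^sub>t\<close> with probability at most \<open>exp (- \<surd>h\<^sub>t)\<close>, and by the upper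
  bound on \<open>L(\<ell>\<^sub>t h\<^sub>t\<^sup>3)\<close> each of them lands in \<open>(\<ell>\<^sub>t, y]\<close> with probability at most
  \<open>P(\<sigma>\<^sub>0 > \<ell>\<^sub>t) / (h\<^sub>t + 1)\<close>, which gives the union bound \<open>(\<surd>h\<^sub>t + 1) / (h\<^sub>t + 1)\<close>.
  Slow variation is used only to see that \<open>\<sigma>\<^sub>0\<close> has unbounded support.
\<close>

lemma Least_pos_int_eq:
  fixes P :: "int \<Rightarrow> bool"
  assumes "\<exists>z>0. P z"
  shows "(LEAST z. 0 < z \<and> P z) = int (LEAST n. 0 < n \<and> P (int n))"
proof (rule Least_equality)
  from assms obtain z where "0 < z" "P z" by blast
  then have ex: "\<exists>n. 0 < n \<and> P (int n)" by (intro exI[of _ "nat z"]) simp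
  show "0 < int (LEAST n. 0 < n \<and> P (int n)) \<and> P (int (LEAST n. 0 < n \<and> P (int n)))"
    using LeastI_ex[OF ex] by simp
  fix y assume "0 < y \<and> P y"
  then have "(LEAST n. 0 < n \<and> P (int n)) \<le> nat y" by (intro Least_le) simp
  with \<open>0 < y \<and> P y\<close> show "int (LEAST n. 0 < n \<and> P (int n)) \<le> y" by linarith
qed

lemma Greatest_nonpos_int_eq:
  fixes P :: "int \<Rightarrow> bool"
  assumes "\<exists>z\<le>0. P z"
  shows "(GREATEST z. z \<le> 0 \<and> P z) = - int (LEAST n. P (- int n))"
proof (rule Greatest_equality)
  from assms obtain z where "z \<le> 0" "P z" by blast
  then have ex: "\<exists>n. P (- int n)" by (intro exI[of _ "nat (- z)"]) simp
  show "- int (LEAST n. P (- int n)) \<le> 0 \<and> P (- int (LEAST n. P (- int n)))"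
    using LeastI_ex[OF ex] by simp
  fix y assume "y \<le> 0 \<and> P y"
  then have "(LEAST n. P (- int n)) \<le> nat (- y)" by (intro Least_le) simp
  with \<open>y \<le> 0 \<and> P y\<close> show "y \<le> - int (LEAST n. P (- int n))" by linarith
qed

lemma Least_pos_int:
  fixes P :: "int \<Rightarrow> bool"
  assumes "0 < z" "P z"
  shows "0 < (LEAST z. 0 < z \<and> P z)" "P (LEAST z. 0 < z \<and> P z)" "(LEAST z. 0 < z \<and> P z) \<le> z"
proof -
  have ex: "\<exists>n. 0 < n \<and> P (int n)" using assms by (intro exI[of _ "nat z"]) simp
  have le: "(LEAST n. 0 < n \<and> P (int n)) \<le> nat z" using assms by (intro Least_le) simp
  have "(LEAST z. 0 < z \<and> P z) = int (LEAST n. 0 < n \<and> P (int n))"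
    using assms by (intro Least_pos_int_eq) auto
  then show "0 < (LEAST z. 0 < z \<and> P z)" "P (LEAST z. 0 < z \<and> P z)" "(LEAST z. 0 < z \<and> P z) \<le> z"
    using assms le LeastI_ex[OF ex] by auto
qed

lemma Greatest_nonpos_int:
  fixes P :: "int \<Rightarrow> bool"
  assumes "z \<le> 0" "P z"
  shows "(GREATEST z. z \<le> 0 \<and> P z) \<le> 0" "P (GREATEST z. z \<le> 0 \<and> P z)"
    "z \<le> (GREATEST z. z \<le> 0 \<and> P z)"
proof -
  have ex: "\<exists>n. P (- int n)" using assms by (intro exI[of _ "nat (- z)"]) simp
  have le: "(LEAST n. P (- int n)) \<le> nat (- z)" using assms by (intro Least_le) simp
  have "(GREATEST z. z \<le> 0 \<and> P z) = - int (LEAST n. P (- int n))"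
    using assms by (intro Greatest_nonpos_int_eq) auto
  then show "(GREATEST z. z \<le> 0 \<and> P z) \<le> 0" "P (GREATEST z. z \<le> 0 \<and> P z)"
      "z \<le> (GREATEST z. z \<le> 0 \<and> P z)"
    using assms le LeastI_ex[OF ex] by auto
qed

lemma measurable_Least_pos_int:
  fixes P :: "int \<Rightarrow> 'a \<Rightarrow> bool"
  assumes [measurable]: "\<And>z. Measurable.pred M (P z)"
  shows "(\<lambda>\<omega>. LEAST z. 0 < z \<and> P z \<omega>) \<in> M \<rightarrow>\<^sub>M count_space UNIV"
proof -
  have "(\<lambda>\<omega>. LEAST z. 0 < z \<and> P z \<omega>) = (\<lambda>\<omega>. if \<exists>z>0. P z \<omega>
      then int (LEAST n. 0 < n \<and> P (int n) \<omega>) else LEAST z. False)"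
    by (intro ext) (auto simp: Least_pos_int_eq intro!: arg_cong[where f = Least])
  also have "\<dots> \<in> M \<rightarrow>\<^sub>M count_space UNIV" by measurable
  finally show ?thesis .
qed

lemma measurable_Greatest_nonpos_int:
  fixes P :: "int \<Rightarrow> 'a \<Rightarrow> bool"
  assumes [measurable]: "\<And>z. Measurable.pred M (P z)"
  shows "(\<lambda>\<omega>. GREATEST z. z \<le> 0 \<and> P z \<omega>) \<in> M \<rightarrow>\<^sub>M count_space UNIV"
proof -
  have "(\<lambda>\<omega>. GREATEST z. z \<le> 0 \<and> P z \<omega>) = (\<lambda>\<omega>. if \<exists>z\<le>0. P z \<omega>
      then - int (LEAST n. P (- int n) \<omega>) else GREATEST z. False)"
    by (intro ext) (auto simp: Greatest_nonpos_int_eq intro!: arg_cong[where f = Greatest])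
  also have "\<dots> \<in> M \<rightarrow>\<^sub>M count_space UNIV" by measurable
  finally show ?thesis .
qed

lemma Least_superlevel_right_continuous:
  fixes f :: "real \<Rightarrow> real"
  assumes cont: "\<And>s. continuous (at_right s) f" and "0 \<le> s" "t \<le> f s"
  shows "0 \<le> (LEAST s. 0 \<le> s \<and> t \<le> f s) \<and> t \<le> f (LEAST s. 0 \<le> s \<and> t \<le> f s)"
proof -
  define S where "S = {s. 0 \<le> s \<and> t \<le> f s}"
  have ne: "S \<noteq> {}" and bdd: "bdd_below S" using assms by (auto simp: S_def bdd_below_def)
  define s0 where "s0 = Inf S"
  have "0 \<le> s0" unfolding s0_def using ne by (rule cInf_greatest) (auto simp: S_def)
  have "s0 \<in> S"
  proof (rule ccontr)
    assume "s0 \<notin> S"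
    with \<open>0 \<le> s0\<close> have "f s0 < t" by (auto simp: S_def)
    with cont[of s0] have "\<forall>\<^sub>F s in at_right s0. f s < t"
      by (auto simp: continuous_within intro: order_tendstoD)
    then obtain b where "b > s0" and below: "\<And>s. s0 < s \<Longrightarrow> s < b \<Longrightarrow> f s < t"
      by (auto simp: eventually_at_right_field)
    then obtain s where s: "s \<in> S" "s < b" using cInf_less_iff[OF ne bdd] by (auto simp: s0_def)
    have "s0 \<le> s" unfolding s0_def using s(1) bdd by (rule cInf_lower)
    with s \<open>s0 \<notin> S\<close> have "f s < t" by (intro below) (auto simp: order.order_iff_strict)
    with s(1) show False by (simp add: S_def)
  qed
  have "(LEAST s. 0 \<le> s \<and> t \<le> f s) = s0"
  proof (rule Least_equality)
    show "0 \<le> s0 \<and> t \<le> f s0" using \<open>s0 \<in> S\<close> by (simp add: S_def)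
    show "s0 \<le> y" if "0 \<le> y \<and> t \<le> f y" for y
      unfolding s0_def by (rule cInf_lower[OF _ bdd]) (use that in \<open>simp add: S_def\<close>)
  qed
  with \<open>s0 \<in> S\<close> show ?thesis by (simp add: S_def)
qed

lemma (in prob_space) continuous_at_right_prob_greater:
  fixes X :: "'a \<Rightarrow> real"
  assumes [measurable]: "X \<in> borel_measurable M"
  shows "continuous (at_right s) (\<lambda>s. prob {\<omega> \<in> space M. s < X \<omega>})"
proof -
  interpret D: real_distribution "distr M borel X" by (intro real_distribution_distr) simp
  have "prob {\<omega> \<in> space M. s < X \<omega>} = 1 - cdf (distr M borel X) s" for s
  proof -
    have "prob {\<omega> \<in> space M. s < X \<omega>} = D.prob (space (distr M borel X) - {..s})"
      by (subst measure_distr) (auto intro: arg_cong[where f = prob])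
    then show ?thesis using D.prob_compl[of "{..s}"] by (simp add: cdf_def2)
  qed
  then show ?thesis by (simp only:) (intro continuous_intros D.cdf_is_right_cont)
qed

lemma (in prob_space) prob_greater_pos:
  fixes X :: "'a \<Rightarrow> real"
  assumes [measurable]: "X \<in> borel_measurable M"
    and unbounded: "\<forall>\<^sub>F u in at_top. prob {\<omega> \<in> space M. u < X \<omega>} \<noteq> 0"
  shows "0 < prob {\<omega> \<in> space M. s < X \<omega>}"
proof -
  obtain u where "s \<le> u" and "prob {\<omega> \<in> space M. u < X \<omega>} \<noteq> 0"
    using eventually_conj[OF eventually_ge_at_top[of s] unbounded] by (auto dest: eventually_happens)
  moreover have "prob {\<omega> \<in> space M. u < X \<omega>} \<le> prob {\<omega> \<in> space M. s < X \<omega>}"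
    using \<open>s \<le> u\<close> by (intro finite_measure_mono) auto
  ultimately show ?thesis using measure_nonneg[of M "{\<omega> \<in> space M. u < X \<omega>}"] by linarith
qed

definition exceedance_error :: "real \<Rightarrow> real" where
  "exceedance_error H = exp (- sqrt H) + (sqrt H + 1) / (H + 1)"

lemma exceedance_error_tendsto_0: "(exceedance_error \<longlongrightarrow> 0) at_top"
  unfolding exceedance_error_def by real_asymp

lemma geometric_plus_linear_le_exceedance_error:
  fixes q H d :: real
  assumes q: "0 < q" "q \<le> 1" and H: "1 \<le> H" and d: "0 \<le> d" "d \<le> q / (H + 1)"
  shows "(1 - q) ^ nat \<lceil>sqrt H / q\<rceil> + nat \<lceil>sqrt H / q\<rceil> * d \<le> exceedance_error H"
proof -
  define N where "N = nat \<lceil>sqrt H / q\<rceil>"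
  have N: "sqrt H / q \<le> N" "N \<le> sqrt H / q + 1"
    using q H by (auto simp: N_def intro: order.trans[OF _ of_nat_ceiling])
  have "(1 - q) ^ N \<le> exp (- q) ^ N"
    using q exp_ge_add_one_self[of "- q"] by (intro power_mono) auto
  also have "\<dots> = exp (- (N * q))" by (simp add: exp_of_nat_mult[symmetric])
  also have "\<dots> \<le> exp (- sqrt H)" using N(1) q by (simp add: field_simps)
  finally have geometric: "(1 - q) ^ N \<le> exp (- sqrt H)" .
  have "N * d \<le> (sqrt H / q + 1) * (q / (H + 1))"
    using N(2) d q by (intro mult_mono) auto
  also have "\<dots> = (sqrt H / q + 1) * q / (H + 1)" by simp
  also have "\<dots> = (sqrt H + q) / (H + 1)" using q by (simp add: distrib_right)
  also have "\<dots> \<le> (sqrt H + 1) / (H + 1)" using q H by (intro divide_right_mono) auto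
  finally show ?thesis using geometric by (simp add: exceedance_error_def N_def)
qed

locale iid_unbounded = prob_space M for M :: "'a measure" +
  fixes \<sigma> :: "int \<Rightarrow> 'a \<Rightarrow> real"
  assumes borel_measurable_\<sigma>[measurable]: "\<And>z. \<sigma> z \<in> borel_measurable M"
    and indep: "indep_vars (\<lambda>_. borel) \<sigma> UNIV"
    and ident: "\<And>z. distr M borel (\<sigma> z) = distr M borel (\<sigma> 0)"
    and unbounded: "\<And>s. 0 < prob {\<omega> \<in> space M. s < \<sigma> 0 \<omega>}"
begin

definition tail :: "real \<Rightarrow> real" where
  "tail s = prob {\<omega> \<in> space M. s < \<sigma> 0 \<omega>}"

lemma tail_pos: "0 < tail s"
  unfolding tail_def by (rule unbounded)

lemma tail_le_1: "tail s \<le> 1"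
  unfolding tail_def by (rule prob_le_1)

lemma prob_greater_eq_tail: "prob {\<omega> \<in> space M. s < \<sigma> z \<omega>} = tail s"
proof -
  have distr: "prob {\<omega> \<in> space M. s < \<sigma> z \<omega>} = measure (distr M borel (\<sigma> z)) {s<..}" for z
    by (subst measure_distr) (auto intro: arg_cong[where f = prob])
  show ?thesis using distr[of z] distr[of 0] ident[of z] by (simp add: tail_def)
qed

lemma tailL_eq: "tailL M \<sigma> s = 1 / tail s"
  by (simp add: tailL_def tail_def)

lemma tail_antimono: "s \<le> s' \<Longrightarrow> tail s' \<le> tail s"
  unfolding tail_def by (intro finite_measure_mono) auto

lemma ell_attained: "0 \<le> ell M \<sigma> t \<and> t \<le> ell M \<sigma> t * rr M \<sigma> t"
proof -
  have "continuous (at_right s) (\<lambda>s. s * tailL M \<sigma> s)" for s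
  proof -
    have "continuous (at_right s) (\<lambda>s. s / tail s)"
      using tail_pos[of s] unfolding tail_def
      by (intro continuous_divide continuous_ident continuous_at_right_prob_greater)
        (auto simp: Lim_ident_at)
    then show ?thesis by (simp add: tailL_eq)
  qed
  moreover have "t \<le> max 0 t * tailL M \<sigma> (max 0 t)"
  proof -
    have "1 \<le> tailL M \<sigma> (max 0 t)"
      using tail_pos[of "max 0 t"] tail_le_1[of "max 0 t"] by (simp add: tailL_eq)
    then have "max 0 t * 1 \<le> max 0 t * tailL M \<sigma> (max 0 t)" by (intro mult_left_mono) auto
    then show ?thesis using max.cobounded2[of t 0] by linarith
  qed
  ultimately show ?thesis
    unfolding ell_def rr_def by (intro Least_superlevel_right_continuous[of _ "max 0 t"]) auto
qed

lemma measurable_Z1[measurable]: "Z1 M \<sigma> t \<in> M \<rightarrow>\<^sub>M count_space UNIV"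
  unfolding Z1_def by (intro measurable_Least_pos_int) measurable

lemma measurable_Z2[measurable]: "Z2 M \<sigma> t \<in> M \<rightarrow>\<^sub>M count_space UNIV"
  unfolding Z2_def by (intro measurable_Greatest_nonpos_int) measurable

lemma borel_measurable_\<sigma>_Z1[measurable]: "(\<lambda>\<omega>. \<sigma> (Z1 M \<sigma> t \<omega>) \<omega>) \<in> borel_measurable M"
  by (rule measurable_compose_countable[OF borel_measurable_\<sigma> measurable_Z1])

lemma borel_measurable_\<sigma>_Z2[measurable]: "(\<lambda>\<omega>. \<sigma> (Z2 M \<sigma> t \<omega>) \<omega>) \<in> borel_measurable M"
  by (rule measurable_compose_countable[OF borel_measurable_\<sigma> measurable_Z2])

lemma Bh_eq: "Bh M \<sigma> h t =
    {\<omega> \<in> space M. t * (h t)\<^sup>2 / rr M \<sigma> t < min (\<sigma> (Z1 M \<sigma> t \<omega>) \<omega>) (\<sigma> (Z2 M \<sigma> t \<omega>) \<omega>)}"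
  by (simp add: Bh_def mt_def)

lemma sets_Bh: "Bh M \<sigma> h t \<in> events"
  unfolding Bh_eq by measurable

lemma prob_\<sigma>_selected_le:
  fixes F :: "int set" and Z :: "'a \<Rightarrow> int"
  assumes F: "finite F" "F \<noteq> {}"
    and selects: "\<And>\<omega>. \<omega> \<in> space M \<Longrightarrow> \<exists>z\<in>F. l < \<sigma> z \<omega> \<Longrightarrow> Z \<omega> \<in> F \<and> l < \<sigma> (Z \<omega>) \<omega>"
    and "x \<le> y" "l \<le> y"
  shows "prob {\<omega> \<in> space M. \<sigma> (Z \<omega>) \<omega> \<le> x} \<le> (1 - tail l) ^ card F + card F * (tail l - tail y)"
proof -
  define none where "none = (\<Inter>z\<in>F. \<sigma> z -` {..l} \<inter> space M)"
  define between where "between = (\<Union>z\<in>F. {\<omega> \<in> space M. l < \<sigma> z \<omega>} - {\<omega> \<in> space M. y < \<sigma> z \<omega>})"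
  have events: "none \<in> events" "between \<in> events"
    unfolding none_def between_def using F by (intro sets.finite_INT sets.finite_UN; auto)+
  have "prob none = (\<Prod>z\<in>F. prob (\<sigma> z -` {..l} \<inter> space M))"
    unfolding none_def using F by (intro indep_varsD[OF indep]) auto
  also have "\<dots> = (\<Prod>z\<in>F. 1 - tail l)"
  proof (rule prod.cong)
    have "\<sigma> z -` {..l} \<inter> space M = space M - {\<omega> \<in> space M. l < \<sigma> z \<omega>}" for z by auto
    then show "prob (\<sigma> z -` {..l} \<inter> space M) = 1 - tail l" for z
      by (simp add: prob_compl prob_greater_eq_tail)
  qed simp
  finally have prob_none: "prob none = (1 - tail l) ^ card F" by simp
  have "prob between \<le> (\<Sum>z\<in>F. prob ({\<omega> \<in> space M. l < \<sigma> z \<omega>} - {\<omega> \<in> space M. y < \<sigma> z \<omega>}))"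
    unfolding between_def using F by (intro finite_measure_subadditive_finite) auto
  also have "\<dots> = (\<Sum>z\<in>F. tail l - tail y)"
  proof (rule sum.cong)
    show "prob ({\<omega> \<in> space M. l < \<sigma> z \<omega>} - {\<omega> \<in> space M. y < \<sigma> z \<omega>}) = tail l - tail y" for z
      using \<open>l \<le> y\<close> by (subst finite_measure_Diff) (auto simp: prob_greater_eq_tail)
  qed simp
  finally have prob_between: "prob between \<le> card F * (tail l - tail y)" by simp
  have "{\<omega> \<in> space M. \<sigma> (Z \<omega>) \<omega> \<le> x} \<subseteq> none \<union> between"
  proof safe
    fix \<omega> assume \<omega>: "\<omega> \<in> space M" "\<sigma> (Z \<omega>) \<omega> \<le> x" "\<omega> \<notin> between"
    show "\<omega> \<in> none"
    proof (cases "\<exists>z\<in>F. l < \<sigma> z \<omega>")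
      case True
      with \<omega> selects \<open>x \<le> y\<close> show ?thesis unfolding between_def by force
    qed (use \<omega> in \<open>auto simp: none_def not_less\<close>)
  qed
  then have "prob {\<omega> \<in> space M. \<sigma> (Z \<omega>) \<omega> \<le> x} \<le> prob (none \<union> between)"
    using events by (intro finite_measure_mono) auto
  also have "\<dots> \<le> prob none + prob between" using events by (intro measure_Un_le)
  finally show ?thesis using prob_none prob_between by linarith
qed

lemma prob_\<sigma>_Z_le:
  assumes "1 \<le> H" "ell M \<sigma> t \<le> y" "x \<le> y"
    and gap: "tail (ell M \<sigma> t) - tail y \<le> tail (ell M \<sigma> t) / (H + 1)"
  shows "prob {\<omega> \<in> space M. \<sigma> (Z1 M \<sigma> t \<omega>) \<omega> \<le> x} \<le> exceedance_error H"
    and "prob {\<omega> \<in> space M. \<sigma> (Z2 M \<sigma> t \<omega>) \<omega> \<le> x} \<le> exceedance_error H"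
proof -
  define l where "l = ell M \<sigma> t"
  define N where "N = nat \<lceil>sqrt H / tail l\<rceil>"
  have "0 < N" using tail_pos[of l] \<open>1 \<le> H\<close> by (simp add: N_def)
  have bound: "(1 - tail l) ^ N + N * (tail l - tail y) \<le> exceedance_error H"
    unfolding N_def using assms tail_pos tail_le_1 tail_antimono
    by (intro geometric_plus_linear_le_exceedance_error) (auto simp: l_def)
  have "prob {\<omega> \<in> space M. \<sigma> (Z1 M \<sigma> t \<omega>) \<omega> \<le> x}
      \<le> (1 - tail l) ^ card {1..int N} + card {1..int N} * (tail l - tail y)"
  proof (rule prob_\<sigma>_selected_le)
    show "Z1 M \<sigma> t \<omega> \<in> {1..int N} \<and> l < \<sigma> (Z1 M \<sigma> t \<omega>) \<omega>"
      if "\<exists>z\<in>{1..int N}. l < \<sigma> z \<omega>" for \<omega>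
    proof -
      from that obtain z where "z \<in> {1..int N}" "l < \<sigma> z \<omega>" by blast
      with Least_pos_int[of z "\<lambda>z. l < \<sigma> z \<omega>"] show ?thesis unfolding Z1_def l_def by auto
    qed
  qed (use assms \<open>0 < N\<close> in \<open>auto simp: l_def\<close>)
  with bound show "prob {\<omega> \<in> space M. \<sigma> (Z1 M \<sigma> t \<omega>) \<omega> \<le> x} \<le> exceedance_error H" by simp
  have "prob {\<omega> \<in> space M. \<sigma> (Z2 M \<sigma> t \<omega>) \<omega> \<le> x}
      \<le> (1 - tail l) ^ card {1 - int N..0} + card {1 - int N..0} * (tail l - tail y)"
  proof (rule prob_\<sigma>_selected_le)
    show "Z2 M \<sigma> t \<omega> \<in> {1 - int N..0} \<and> l < \<sigma> (Z2 M \<sigma> t \<omega>) \<omega>"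
      if "\<exists>z\<in>{1 - int N..0}. l < \<sigma> z \<omega>" for \<omega>
    proof -
      from that obtain z where "z \<in> {1 - int N..0}" "l < \<sigma> z \<omega>" by blast
      with Greatest_nonpos_int[of z "\<lambda>z. l < \<sigma> z \<omega>"] show ?thesis unfolding Z2_def l_def by auto
    qed
  qed (use assms \<open>0 < N\<close> in \<open>auto simp: l_def\<close>)
  with bound show "prob {\<omega> \<in> space M. \<sigma> (Z2 M \<sigma> t \<omega>) \<omega> \<le> x} \<le> exceedance_error H" by simp
qed

lemma tail_diff_le:
  assumes "tailL M \<sigma> y < tailL M \<sigma> l * (1 + 1 / H)" "0 < H"
  shows "tail l - tail y \<le> tail l / (H + 1)"
proof -
  have "tail l * H < tail y * (H + 1)"
    using assms tail_pos[of l] tail_pos[of y] by (simp add: tailL_eq field_simps)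
  then show ?thesis using \<open>0 < H\<close> by (simp add: field_simps)
qed

lemma prob_Bh_ge:
  assumes "2 \<le> h t"
    and upper: "tailL M \<sigma> (ell M \<sigma> t * h t ^ 3) < tailL M \<sigma> (ell M \<sigma> t) * (1 + 1 / h t)"
  shows "1 - 2 * exceedance_error (h t) \<le> prob (Bh M \<sigma> h t)"
proof -
  define l H where "l = ell M \<sigma> t" and "H = h t"
  define x y where "x = t * H\<^sup>2 / rr M \<sigma> t" and "y = l * H ^ 3"
  have "0 \<le> l" "t \<le> l * rr M \<sigma> t" and "0 < rr M \<sigma> t"
    using ell_attained[of t] tail_pos[of l] by (auto simp: l_def rr_def tailL_eq)
  then have "t / rr M \<sigma> t \<le> l" by (simp add: divide_le_eq)
  then have "t / rr M \<sigma> t * H\<^sup>2 \<le> l * H\<^sup>2" by (intro mult_right_mono) auto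
  then have "x \<le> l * H\<^sup>2" by (simp add: x_def)
  also have "\<dots> \<le> y" unfolding y_def using \<open>0 \<le> l\<close> \<open>2 \<le> h t\<close>
    by (intro mult_left_mono power_increasing) (auto simp: H_def)
  finally have "x \<le> y" .
  have "l \<le> y" unfolding y_def using \<open>0 \<le> l\<close> \<open>2 \<le> h t\<close>
    by (metis H_def mult.right_neutral mult_left_mono one_le_numeral one_le_power order_trans)
  have "tail l - tail y \<le> tail l / (H + 1)"
    using upper \<open>2 \<le> h t\<close> by (intro tail_diff_le) (auto simp: l_def y_def H_def)
  then have Z_bounds: "prob {\<omega> \<in> space M. \<sigma> (Z1 M \<sigma> t \<omega>) \<omega> \<le> x} \<le> exceedance_error H"
    "prob {\<omega> \<in> space M. \<sigma> (Z2 M \<sigma> t \<omega>) \<omega> \<le> x} \<le> exceedance_error H"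
    using prob_\<sigma>_Z_le[of H t y x] \<open>l \<le> y\<close> \<open>x \<le> y\<close> \<open>2 \<le> h t\<close> by (auto simp: l_def H_def)
  have "space M - Bh M \<sigma> h t
      \<subseteq> {\<omega> \<in> space M. \<sigma> (Z1 M \<sigma> t \<omega>) \<omega> \<le> x} \<union> {\<omega> \<in> space M. \<sigma> (Z2 M \<sigma> t \<omega>) \<omega> \<le> x}"
    by (auto simp: Bh_eq x_def H_def not_less)
  then have "prob (space M - Bh M \<sigma> h t)
      \<le> prob ({\<omega> \<in> space M. \<sigma> (Z1 M \<sigma> t \<omega>) \<omega> \<le> x} \<union> {\<omega> \<in> space M. \<sigma> (Z2 M \<sigma> t \<omega>) \<omega> \<le> x})"
    by (intro finite_measure_mono) measurable
  also have "\<dots> \<le> prob {\<omega> \<in> space M. \<sigma> (Z1 M \<sigma> t \<omega>) \<omega> \<le> x} + prob {\<omega> \<in> space M. \<sigma> (Z2 M \<sigma> t \<omega>) \<omega> \<le> x}"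
    by (intro measure_Un_le) measurable
  finally have "prob (space M - Bh M \<sigma> h t) \<le> 2 * exceedance_error H" using Z_bounds by linarith
  then show ?thesis by (simp add: prob_compl sets_Bh H_def)
qed

end

theorem proposition3p10:
  fixes M :: "'a measure" and \<sigma> :: "int \<Rightarrow> 'a \<Rightarrow> real" and h :: "real \<Rightarrow> real"
  assumes "prob_space M"
    and rv: "\<And>z. \<sigma> z \<in> borel_measurable M"
    and indep: "prob_space.indep_vars M (\<lambda>_. borel) \<sigma> UNIV"
    and ident: "\<And>z. distr M borel (\<sigma> z) = distr M borel (\<sigma> 0)"
    and pos: "\<And>z \<omega>. \<omega> \<in> space M \<Longrightarrow> \<sigma> z \<omega> > 0"
    and slow: "\<And>v. v > 0 \<Longrightarrow>
       ((\<lambda>u. tailL M \<sigma> (u * v) / tailL M \<sigma> u) \<longlongrightarrow> 1) at_top"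
    and h_inf: "filterlim h at_top at_top"
    and h_small: "(\<lambda>t. (h t)\<^sup>2) \<in> o[at_top](rr M \<sigma>)"
    and h_bounds: "\<forall>\<^sub>F t in at_top.
       tailL M \<sigma> (ell M \<sigma> t / (h t) ^ 3) > tailL M \<sigma> (ell M \<sigma> t) * (1 - 1 / h t) \<and>
       tailL M \<sigma> (ell M \<sigma> t * (h t) ^ 3) < tailL M \<sigma> (ell M \<sigma> t) * (1 + 1 / h t)"
  shows "((\<lambda>t. measure M (Bh M \<sigma> h t)) \<longlongrightarrow> 1) at_top"
proof -
  interpret prob_space M by fact
  have "\<forall>\<^sub>F u in at_top. tailL M \<sigma> (u * 1) / tailL M \<sigma> u \<noteq> 0"
    using slow[of 1] by (intro tendsto_imp_eventually_ne) auto
  then have unbounded: "\<forall>\<^sub>F u in at_top. prob {\<omega> \<in> space M. u < \<sigma> 0 \<omega>} \<noteq> 0"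
    by eventually_elim (auto simp: tailL_def)
  interpret iid_unbounded M \<sigma>
    by unfold_locales (rule rv indep ident prob_greater_pos[OF rv unbounded])+
  have lower: "\<forall>\<^sub>F t in at_top. 1 - 2 * exceedance_error (h t) \<le> prob (Bh M \<sigma> h t)"
    using h_bounds h_inf[unfolded filterlim_at_top, rule_format, of 2]
    by eventually_elim (simp add: prob_Bh_ge)
  have upper: "\<forall>\<^sub>F t in at_top. prob (Bh M \<sigma> h t) \<le> 1" by simp
  have "((\<lambda>t. 1 - 2 * exceedance_error (h t)) \<longlongrightarrow> 1 - 2 * 0) at_top"
    by (intro tendsto_intros filterlim_compose[OF exceedance_error_tendsto_0 h_inf])
  then show ?thesis
    using tendsto_sandwich[OF lower upper _ tendsto_const] by simp
qed

end
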